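(* Let $m\ge2$ and let $U\subset\mathbb R^m$ be open with $|U|=+\infty$. Then $U$ has infinite anexometer, i.e. $\|\chi_U\|_{BF(U)}=+\infty$.
   Context: $\mathcal{DM}_\infty(U)=\{u\in L_\infty(U;\mathbb R^m):\operatorname{div}u\text{ is a finite signed Radon measure on }U\}$ and $\|\chi_U\|_{BF(U)}=\sup\{\operatorname{div}u(U):u\in\mathcal{DM}_\infty(U),\|u\|_\infty\le1\}$. *)

theory Defs
  imports "HOL-Analysis.Analysis"
begin

fun dderivs :: "'a::euclidean_space list \<Rightarrow> ('a \<Rightarrow> real) \<Rightarrow> 'a \<Rightarrow> real" where
  "dderivs [] f = f"
| "dderivs (v # vs) f = (\<lambda>x. frechet_derivative (dderivs vs f) (at x) v)"

definition smooth_fun :: "('a::euclidean_space \<Rightarrow> real) \<Rightarrow> bool" where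
  "smooth_fun f \<longleftrightarrow> (\<forall>vs x. dderivs vs f differentiable (at x))"

text \<open>Test functions C_c^infinity(U) (extended by zero outside U).\<close>
definition test_fun :: "'a::euclidean_space set \<Rightarrow> ('a \<Rightarrow> real) \<Rightarrow> bool" where
  "test_fun U \<phi> \<longleftrightarrow> smooth_fun \<phi> \<and> compact (closure {x. \<phi> x \<noteq> 0})
      \<and> closure {x. \<phi> x \<noteq> 0} \<subseteq> U"

text \<open>Finite (hence Radon) positive Borel measure on the open set U.\<close>
definition fin_borel_on :: "'a::euclidean_space set \<Rightarrow> 'a measure \<Rightarrow> bool" where
  "fin_borel_on U \<mu> \<longleftrightarrow> sets \<mu> = sets (restrict_space borel U) \<and> finite_measure \<mu>"

text \<open>u \<in> L_\<infinity>(U;R^m) and div u is the finite signed Radon measure mu_p - mu_n on U,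
  in the sense of distributions.\<close>
definition div_measure :: "'a::euclidean_space set \<Rightarrow> ('a \<Rightarrow> 'a) \<Rightarrow> 'a measure \<Rightarrow> 'a measure \<Rightarrow> bool" where
  "div_measure U u \<mu>p \<mu>n \<longleftrightarrow>
     u \<in> borel_measurable (restrict_space lebesgue U)
   \<and> (\<exists>C. AE x in restrict_space lebesgue U. norm (u x) \<le> C)
   \<and> fin_borel_on U \<mu>p \<and> fin_borel_on U \<mu>n
   \<and> (\<forall>\<phi>. test_fun U \<phi> \<longrightarrow>
        (LINT x:U|lebesgue. frechet_derivative \<phi> (at x) (u x))
          = - ((LINT x|\<mu>p. \<phi> x) - (LINT x|\<mu>n. \<phi> x)))"

definition DM_inf :: "'a::euclidean_space set \<Rightarrow> ('a \<Rightarrow> 'a) set" where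
  "DM_inf U = {u. \<exists>\<mu>p \<mu>n. div_measure U u \<mu>p \<mu>n}"

definition anexometer :: "'a::euclidean_space set \<Rightarrow> ereal" where
  "anexometer U = Sup {ereal (measure \<mu>p U - measure \<mu>n U) | u \<mu>p \<mu>n.
       div_measure U u \<mu>p \<mu>n \<and> (AE x in restrict_space lebesgue U. norm (u x) \<le> 1)}"

end

theory Submission
  imports Defs
begin

text \<open>
  An open set \<open>U\<close> of infinite measure contains, for every \<open>A\<close>, a finite family \<open>S\<close> of lattice
  cubes of some side \<open>\<delta>\<close> with total volume \<open>card S * \<delta>^m \<ge> A\<close>. A discrete Loomis--Whitney
  inequality \<open>card S^(m-1) \<le> L * P^m\<close>, where \<open>P\<close> is the size of the largest coordinate
  projection of \<open>S\<close>, say along the direction \<open>b\<close>, then forces the projected area \<open>P * \<delta>^(m-1)\<close>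
  to be large; this is where \<open>m \<ge> 2\<close> is used. Pick one cube of \<open>S\<close> in each of the \<open>P\<close>
  columns parallel to \<open>b\<close> and let \<open>u = f b\<close>, where along each column \<open>f\<close> rises smoothly from
  \<open>-1\<close> to \<open>1\<close> inside the chosen cube. Then \<open>norm u \<le> 1\<close>, and \<open>div u\<close> is the derivative of \<open>f\<close>
  along \<open>b\<close>: a nonnegative density supported in the cubes, of total mass \<open>2 * P * \<delta>^(m-1)\<close>.
\<close>

lemma has_real_derivative_clamp_comp:
  fixes g :: "real \<Rightarrow> real"
  assumes g: "\<And>s. (g has_real_derivative g' s) (at s)" and "g' 0 = 0" "g' 1 = 0"
  shows "((\<lambda>s. g (max 0 (min 1 s))) has_real_derivative g' (max 0 (min 1 s))) (at s)"
proof -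
  let ?h = "\<lambda>s. g (max 0 (min 1 s))" and ?D = "g' (max 0 (min 1 s))"
  have piece: "(?h has_real_derivative ?D) (at s within P)"
    if P: "closed P" and eq: "\<And>y. y \<in> P \<Longrightarrow> ?h y = f y"
      and f: "s \<in> P \<Longrightarrow> (f has_real_derivative ?D) (at s within P)" for P f
  proof (cases "s \<in> P")
    case True
    show ?thesis
      by (rule has_field_derivative_transform_within[OF f[OF True] zero_less_one True])
         (simp add: eq)
  next
    case False
    then have "at s within P = bot"
      using P by (simp add: at_within_eq_bot_iff)
    then show ?thesis
      unfolding has_field_derivative_def by (simp add: has_derivative_bot bounded_linear_mult_right)
  qed
  have lo: "(?h has_real_derivative ?D) (at s within {..0})"
    by (rule piece[where f="\<lambda>_. g 0"]) (use assms in auto)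
  have mid: "(?h has_real_derivative ?D) (at s within {0..1})"
    by (rule piece[where f=g]) (use g in \<open>auto intro: has_field_derivative_at_within\<close>)
  have hi: "(?h has_real_derivative ?D) (at s within {1..})"
    by (rule piece[where f="\<lambda>_. g 1"]) (use assms in auto)
  show ?thesis
    using lo mid hi unfolding has_field_derivative_iff
    by (intro Lim_Un_univ[where S="{..0} \<union> {0..1}" and T="{1..}"] Lim_Un) auto
qed

definition cos_step :: "real \<Rightarrow> real" where
  "cos_step s = - cos (pi * max 0 (min 1 s))"

definition cos_step' :: "real \<Rightarrow> real" where
  "cos_step' s = pi * sin (pi * max 0 (min 1 s))"

lemma has_real_derivative_cos_step: "(cos_step has_real_derivative cos_step' s) (at s)"
  unfolding cos_step_def cos_step'_def
  by (rule has_real_derivative_clamp_comp[where g="\<lambda>s. - cos (pi * s)"])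
     (auto intro!: derivative_eq_intros)

lemma abs_cos_step_le: "\<bar>cos_step s\<bar> \<le> 1"
  by (simp add: cos_step_def)

lemma cos_step'_nonneg: "0 \<le> cos_step' s"
  unfolding cos_step'_def by (intro mult_nonneg_nonneg sin_ge_zero) auto

lemma cos_step'_le_pi: "cos_step' s \<le> pi"
  unfolding cos_step'_def using sin_le_one[of "pi * max 0 (min 1 s)"] by (simp add: mult_left_le)

lemma cos_step'_eq_0: "s \<le> 0 \<or> 1 \<le> s \<Longrightarrow> cos_step' s = 0"
  unfolding cos_step'_def by auto

lemma borel_measurable_cos_step [measurable]: "cos_step \<in> borel_measurable borel"
  using has_real_derivative_cos_step
  by (intro borel_measurable_continuous_onI continuous_at_imp_continuous_on) (blast intro: DERIV_isCont)

lemma borel_measurable_cos_step' [measurable]: "cos_step' \<in> borel_measurable borel"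
  unfolding cos_step'_def by (intro borel_measurable_continuous_onI continuous_intros)

lemma nn_integral_cos_step': "(\<integral>\<^sup>+s. ennreal (cos_step' s) \<partial>lborel) = 2"
proof -
  have "(cos_step' has_integral (cos_step 1 - cos_step 0)) {0..1}"
    using has_real_derivative_cos_step
    by (intro fundamental_theorem_of_calculus)
       (auto simp: has_real_derivative_iff_has_vector_derivative[symmetric] intro: has_field_derivative_at_within)
  then have "(cos_step' has_integral 2) {0..1}"
    by (simp add: cos_step_def)
  then have "(\<integral>\<^sup>+s. ennreal (indicator {0..1} s * cos_step' s) \<partial>lborel) = ennreal 2"
    by (rule nn_integral_has_integral_lebesgue[OF cos_step'_nonneg])
  moreover have "indicator {0..1} s * cos_step' s = cos_step' s" for s :: real
    using cos_step'_eq_0[of s] by (cases "s \<in> {0..1}") auto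
  ultimately show ?thesis by simp
qed

lemma nn_integral_cos_step'_rescaled:
  assumes "\<delta> > 0"
  shows "(\<integral>\<^sup>+t. ennreal (cos_step' ((t - a) / \<delta>) / \<delta>) \<partial>lborel) = 2"
proof -
  have "(\<integral>\<^sup>+t. ennreal (cos_step' ((t - a) / \<delta>) / \<delta>) \<partial>lborel)
      = ennreal \<bar>\<delta>\<bar> * (\<integral>\<^sup>+s. ennreal (cos_step' ((a + \<delta> * s - a) / \<delta>) / \<delta>) \<partial>lborel)"
    by (rule nn_integral_real_affine) (use assms in auto)
  also have "(\<lambda>s. ennreal (cos_step' ((a + \<delta> * s - a) / \<delta>) / \<delta>)) = (\<lambda>s. ennreal (1 / \<delta>) * ennreal (cos_step' s))"
    using assms by (auto simp: ennreal_mult[symmetric] cos_step'_nonneg)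
  also have "(\<integral>\<^sup>+s. ennreal (1 / \<delta>) * ennreal (cos_step' s) \<partial>lborel) = ennreal (1 / \<delta>) * 2"
    by (simp add: nn_integral_cmult nn_integral_cos_step')
  also have "ennreal \<bar>\<delta>\<bar> * (ennreal (1 / \<delta>) * 2) = 2"
    using assms by (simp add: mult.assoc[symmetric] ennreal_mult[symmetric])
  finally show ?thesis .
qed

lemma card_eq_sum_card_fibre_projections:
  fixes S :: "('i \<Rightarrow> 'b::zero) set"
  assumes "finite S"
  shows "card S = (\<Sum>k\<in>(\<lambda>z. z j) ` S. card ((\<lambda>z. z(j := 0)) ` {z\<in>S. z j = k}))"
proof -
  have "card {z\<in>S. z j = k} = card ((\<lambda>z. z(j := 0)) ` {z\<in>S. z j = k})" for k
  proof (rule card_image[symmetric], rule inj_onI)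
    fix z w assume "z \<in> {z\<in>S. z j = k}" "w \<in> {z\<in>S. z j = k}" and eq: "z(j := 0) = w(j := 0)"
    then have "z j = w j" by simp
    have "z = (z(j := 0))(j := z j)" by simp
    also have "\<dots> = w" unfolding eq \<open>z j = w j\<close> by simp
    finally show "z = w" .
  qed
  moreover have "card S = (\<Sum>k\<in>(\<lambda>z. z j) ` S. card {z\<in>S. z j = k})"
    using sum.image_gen[OF assms, of "\<lambda>_. 1::nat" "\<lambda>z. z j"] by (simp only: card_eq_sum)
  ultimately show ?thesis by simp
qed

lemma sum_card_projected_fibres_le:
  fixes S :: "('i \<Rightarrow> 'b::zero) set"
  assumes "finite S" "i \<noteq> j"
  shows "(\<Sum>k\<in>(\<lambda>z. z j) ` S. card ((\<lambda>z. z(i := 0)) ` (\<lambda>z. z(j := 0)) ` {z\<in>S. z j = k}))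
    \<le> card ((\<lambda>z. z(i := 0)) ` S)"
proof -
  let ?F = "\<lambda>k. (\<lambda>z. z(i := 0)) ` {z\<in>S. z j = k}"
  have "(\<lambda>z. z(i := 0)) ` (\<lambda>z. z(j := 0)) ` {z\<in>S. z j = k} = (\<lambda>z. z(j := 0)) ` ?F k" for k
    using assms(2) by (simp add: image_image fun_upd_twist)
  then have "card ((\<lambda>z. z(i := 0)) ` (\<lambda>z. z(j := 0)) ` {z\<in>S. z j = k}) \<le> card (?F k)" for k
    by (simp add: card_image_le assms(1))
  then have "(\<Sum>k\<in>(\<lambda>z. z j) ` S. card ((\<lambda>z. z(i := 0)) ` (\<lambda>z. z(j := 0)) ` {z\<in>S. z j = k}))
      \<le> (\<Sum>k\<in>(\<lambda>z. z j) ` S. card (?F k))"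
    by (rule sum_mono)
  also have "\<dots> = card (\<Union>k\<in>(\<lambda>z. z j) ` S. ?F k)"
  proof (rule card_UN_disjoint[symmetric])
    have F_coord: "w j = k" if "w \<in> ?F k" for w k
    proof -
      from that obtain z where "z j = k" "w = z(i := 0)" by blast
      then show ?thesis using assms(2) by simp
    qed
    have "?F k \<inter> ?F k' = {}" if "k \<noteq> k'" for k k'
    proof (unfold disjoint_iff, intro allI impI notI)
      fix w assume "w \<in> ?F k" "w \<in> ?F k'"
      then show False using F_coord[of w k] F_coord[of w k'] that by simp
    qed
    then show "\<forall>k\<in>(\<lambda>z. z j) ` S. \<forall>k'\<in>(\<lambda>z. z j) ` S. k \<noteq> k' \<longrightarrow> ?F k \<inter> ?F k' = {}"
      by simp
  qed (use assms(1) in simp_all)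
  also have "\<dots> \<le> card ((\<lambda>z. z(i := 0)) ` S)"
    using assms(1) by (intro card_mono) auto
  finally show ?thesis .
qed

lemma card_le_mult_card_projections:
  fixes S :: "('i \<Rightarrow> 'b::zero) set"
  assumes "i \<noteq> j" "finite S"
  shows "card S \<le> card ((\<lambda>z. z(i := 0)) ` S) * card ((\<lambda>z. z(j := 0)) ` S)"
proof -
  have "inj_on (\<lambda>z. (z(i := 0), z(j := 0))) S"
  proof (rule inj_onI, rule ext)
    fix z w c assume "(z(i := 0), z(j := 0)) = (w(i := 0), w(j := 0))"
    then have i: "z(i := 0) = w(i := 0)" and j: "z(j := 0) = w(j := 0)" by simp_all
    show "z c = w c"
      using fun_cong[OF i, of c] fun_cong[OF j, of c] assms(1) by (cases "c = i") simp_all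
  qed
  then have "card S \<le> card ((\<lambda>z. z(i := 0)) ` S \<times> (\<lambda>z. z(j := 0)) ` S)"
    using assms(2) by (intro card_inj_on_le) auto
  then show ?thesis by (simp add: card_cartesian_product)
qed

lemma sum_card_projected_slices_le:
  fixes S :: "('i \<Rightarrow> 'b::zero) set"
  assumes "finite S" "j \<notin> I" "\<forall>i\<in>I. card ((\<lambda>z. z(i := 0)) ` S) \<le> P"
  shows "(\<Sum>k\<in>(\<lambda>z. z j) ` S. \<Sum>i\<in>I. card ((\<lambda>z. z(i := 0)) ` (\<lambda>z. z(j := 0)) ` {z\<in>S. z j = k}))
    \<le> card I * P"
proof -
  have "(\<Sum>k\<in>(\<lambda>z. z j) ` S. \<Sum>i\<in>I. card ((\<lambda>z. z(i := 0)) ` (\<lambda>z. z(j := 0)) ` {z\<in>S. z j = k}))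
      = (\<Sum>i\<in>I. \<Sum>k\<in>(\<lambda>z. z j) ` S. card ((\<lambda>z. z(i := 0)) ` (\<lambda>z. z(j := 0)) ` {z\<in>S. z j = k}))"
    by (rule sum.swap)
  also have "\<dots> \<le> (\<Sum>i\<in>I. P)"
  proof (rule sum_mono)
    fix i assume i: "i \<in> I"
    then have "i \<noteq> j" using assms(2) by blast
    then have "(\<Sum>k\<in>(\<lambda>z. z j) ` S. card ((\<lambda>z. z(i := 0)) ` (\<lambda>z. z(j := 0)) ` {z\<in>S. z j = k}))
        \<le> card ((\<lambda>z. z(i := 0)) ` S)"
      by (rule sum_card_projected_fibres_le[OF assms(1)])
    also have "\<dots> \<le> P" using i assms(3) by blast
    finally show "(\<Sum>k\<in>(\<lambda>z. z j) ` S. card ((\<lambda>z. z(i := 0)) ` (\<lambda>z. z(j := 0)) ` {z\<in>S. z j = k}))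
        \<le> P" .
  qed
  finally show ?thesis by simp
qed

lemma le_root_mult_of_pow_pred_le:
  fixes x a P L :: real
  assumes "n \<ge> 1" "0 \<le> x" "0 \<le> a" "0 \<le> L" "x \<le> P" "x ^ (n - 1) \<le> L * a ^ n"
  shows "x \<le> root n (P * L) * a"
proof -
  obtain m where n: "n = Suc m" using assms(1) by (cases n) auto
  have P: "0 \<le> P" using assms by linarith
  have "x ^ n = x * x ^ (n - 1)"
    by (simp add: n)
  also have "\<dots> \<le> P * (L * a ^ n)"
    using assms by (intro mult_mono) auto
  also have "\<dots> = (root n (P * L) * a) ^ n"
    using assms P by (simp add: power_mult_distrib real_root_pow_pos2)
  finally have "x ^ Suc m \<le> (root n (P * L) * a) ^ Suc m"
    by (simp only: n)
  moreover have "0 \<le> root n (P * L) * a"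
    using assms P by simp
  ultimately show ?thesis
    by (rule power_le_imp_le_base)
qed

definition loomis_whitney_const :: "nat \<Rightarrow> real" where
  "loomis_whitney_const n = (\<Prod>k = 2..<n. real k ^ k)"

lemma loomis_whitney_const_pos: "loomis_whitney_const n > 0"
  unfolding loomis_whitney_const_def by (intro prod_pos) auto

lemma loomis_whitney_weak_step:
  fixes S :: "('i \<Rightarrow> 'b::zero) set"
  assumes IH: "\<And>(T :: ('i \<Rightarrow> 'b) set) Q. finite T \<Longrightarrow> \<forall>z\<in>T. \<forall>c. c \<notin> I \<longrightarrow> z c = 0 \<Longrightarrow>
      \<forall>i\<in>I. card ((\<lambda>z. z(i := 0)) ` T) \<le> Q \<Longrightarrow> real (card T) ^ (card I - 1) \<le> L * real Q ^ card I"
    and "card I \<ge> 2" "j \<notin> I" "0 \<le> L" "finite S" "\<forall>z\<in>S. \<forall>c. c \<notin> insert j I \<longrightarrow> z c = 0"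
    and "\<forall>i\<in>insert j I. card ((\<lambda>z. z(i := 0)) ` S) \<le> P"
  shows "real (card S) ^ card I \<le> real P * L * real (card I) ^ card I * real P ^ card I"
proof -
  let ?n = "card I"
  define slice where "slice k = (\<lambda>z. z(j := 0)) ` {z\<in>S. z j = k}" for k
  define a where "a k = (\<Sum>i\<in>I. card ((\<lambda>z. z(i := 0)) ` slice k))" for k
  define c where "c = root ?n (real P * L)"
  have c: "0 \<le> c" unfolding c_def using assms(4) by (intro real_root_ge_zero) simp
  have slice_le: "real (card (slice k)) \<le> c * a k" for k
  proof -
    have "finite I" using assms(2) by (metis card.infinite not_numeral_le_zero)
    have "real (card (slice k)) ^ (?n - 1) \<le> L * real (a k) ^ ?n"
    proof (rule IH)
      show "finite (slice k)" using assms(5) by (simp add: slice_def)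
      show "\<forall>z\<in>slice k. \<forall>c. c \<notin> I \<longrightarrow> z c = 0" using assms(6) by (auto simp: slice_def)
      show "\<forall>i\<in>I. card ((\<lambda>z. z(i := 0)) ` slice k) \<le> a k"
        unfolding a_def using \<open>finite I\<close> by (intro ballI member_le_sum) simp_all
    qed
    moreover have "slice k \<subseteq> (\<lambda>z. z(j := 0)) ` S" by (auto simp: slice_def)
    then have "card (slice k) \<le> card ((\<lambda>z. z(j := 0)) ` S)"
      using assms(5) by (intro card_mono) simp_all
    then have "card (slice k) \<le> P" using assms(7) by (meson insertI1 le_trans)
    ultimately show ?thesis
      unfolding c_def using assms(2,4) by (intro le_root_mult_of_pow_pred_le) auto
  qed
  have "real (card S) = (\<Sum>k\<in>(\<lambda>z. z j) ` S. real (card (slice k)))"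
    using card_eq_sum_card_fibre_projections[OF assms(5), of j]
    by (simp add: slice_def flip: of_nat_sum)
  also have "\<dots> \<le> c * (\<Sum>k\<in>(\<lambda>z. z j) ` S. real (a k))"
    unfolding sum_distrib_left by (intro sum_mono slice_le)
  also have "\<dots> \<le> c * (real ?n * real P)"
    using sum_card_projected_slices_le[OF assms(5,3), of P] assms(7) c
    by (intro mult_left_mono) (simp_all add: a_def slice_def flip: of_nat_sum of_nat_mult)
  finally have "real (card S) ^ ?n \<le> (c * (real ?n * real P)) ^ ?n"
    by (rule power_mono) simp
  also have "\<dots> = real P * L * real ?n ^ ?n * real P ^ ?n"
    unfolding c_def using assms(2,4) by (simp add: power_mult_distrib real_root_pow_pos2)
  finally show ?thesis .
qed

text \<open>A weak form of the discrete Loomis--Whitney inequality (which bounds \<open>card S^(n-1)\<close>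
  by the product of the sizes of the \<open>n\<close> projections), proved by induction on the dimension:
  slice \<open>S\<close> along one coordinate, bound each slice by the induction hypothesis, and sum.\<close>
lemma loomis_whitney_weak:
  fixes S :: "('i \<Rightarrow> 'b::zero) set"
  assumes "card I \<ge> 2" "finite I" "finite S" "\<forall>z\<in>S. \<forall>c. c \<notin> I \<longrightarrow> z c = 0"
    and "\<forall>i\<in>I. card ((\<lambda>z. z(i := 0)) ` S) \<le> P"
  shows "real (card S) ^ (card I - 1) \<le> loomis_whitney_const (card I) * real P ^ card I"
  using assms
proof (induction "card I" arbitrary: I S P rule: nat_induct_at_least)
  case base
  then obtain i j where I: "I = {i, j}" "i \<noteq> j" by (metis card_2_iff)
  have "card S \<le> card ((\<lambda>z. z(i := 0)) ` S) * card ((\<lambda>z. z(j := 0)) ` S)"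
    by (rule card_le_mult_card_projections[OF I(2) base(3)])
  also have "\<dots> \<le> P * P"
    by (intro mult_le_mono bspec[OF base(5)]) (simp_all add: I(1))
  finally show ?case
    using base(1)[symmetric] by (simp add: loomis_whitney_const_def power2_eq_square flip: of_nat_mult)
next
  case (Suc n)
  have "I \<noteq> {}" using Suc.hyps(1,3) by auto
  then obtain j where j: "j \<in> I" by blast
  have I: "card (I - {j}) = n" "finite (I - {j})" "insert j (I - {j}) = I"
    using Suc.hyps(3) Suc.prems(1) j by auto
  have IH: "real (card T) ^ (card (I - {j}) - 1) \<le> loomis_whitney_const n * real Q ^ card (I - {j})"
    if "finite T" "\<forall>z\<in>T. \<forall>c. c \<notin> I - {j} \<longrightarrow> z c = 0"
      "\<forall>i\<in>I - {j}. card ((\<lambda>z. z(i := 0)) ` T) \<le> Q" for T :: "('i \<Rightarrow> 'b) set" and Q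
    using Suc.hyps(2)[OF I(1)[symmetric] I(2) that] I(1) by simp
  have "real (card S) ^ card (I - {j})
      \<le> real P * loomis_whitney_const n * real (card (I - {j})) ^ card (I - {j}) * real P ^ card (I - {j})"
    by (rule loomis_whitney_weak_step[OF IH])
       (use Suc.hyps(1) Suc.prems(2-4) I loomis_whitney_const_pos[of n] in auto)
  then have "real (card S) ^ n \<le> real P * loomis_whitney_const n * real n ^ n * real P ^ n"
    using I(1) by simp
  also have "\<dots> = loomis_whitney_const (Suc n) * real P ^ Suc n"
    using Suc.hyps(1) by (simp add: loomis_whitney_const_def prod.atLeastLessThan_Suc)
  finally show ?case using Suc.hyps(3)[symmetric] by simp
qed

lemma test_fun_has_derivative:
  assumes "test_fun U \<phi>"
  shows "(\<phi> has_derivative frechet_derivative \<phi> (at x)) (at x)"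
proof -
  have "dderivs [] \<phi> differentiable (at x)"
    using assms unfolding test_fun_def smooth_fun_def by blast
  then show ?thesis by (simp add: frechet_derivative_works)
qed

lemma continuous_on_test_fun: "test_fun U \<phi> \<Longrightarrow> continuous_on UNIV \<phi>"
  by (metis test_fun_has_derivative continuous_at_imp_continuous_on has_derivative_continuous)

lemma continuous_on_test_fun_derivative:
  assumes "test_fun U \<phi>"
  shows "continuous_on UNIV (\<lambda>x. frechet_derivative \<phi> (at x) v)"
proof -
  have "dderivs [v] \<phi> differentiable (at x)" for x
    using assms unfolding test_fun_def smooth_fun_def by blast
  then have "isCont (dderivs [v] \<phi>) x" for x
    by (simp add: differentiable_imp_continuous_within)
  then show ?thesis by (simp add: continuous_at_imp_continuous_on)
qed

lemma borel_measurable_test_fun: "test_fun U \<phi> \<Longrightarrow> \<phi> \<in> borel_measurable borel"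
  by (rule borel_measurable_continuous_onI[OF continuous_on_test_fun])

lemma borel_measurable_test_fun_derivative:
  "test_fun U \<phi> \<Longrightarrow> (\<lambda>x. frechet_derivative \<phi> (at x) v) \<in> borel_measurable borel"
  by (rule borel_measurable_continuous_onI[OF continuous_on_test_fun_derivative])

lemma test_fun_outside_support:
  assumes "test_fun U \<phi>" "x \<notin> closure {x. \<phi> x \<noteq> 0}"
  shows "\<phi> x = 0" "frechet_derivative \<phi> (at x) = (\<lambda>_. 0)"
proof -
  let ?C = "- closure {x. \<phi> x \<noteq> 0}"
  have zero: "\<phi> y = 0" if "y \<notin> closure {x. \<phi> x \<noteq> 0}" for y
    using that closure_subset[of "{x. \<phi> x \<noteq> 0}"] by auto
  then show "\<phi> x = 0" using assms(2) .
  have "(\<phi> has_derivative (\<lambda>_. 0)) (at x)"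
  proof (rule has_derivative_transform_within_open[where s="?C" and f="\<lambda>_. 0"])
    show "x \<in> ?C" using assms(2) by simp
    show "0 = \<phi> y" if "y \<in> ?C" for y using zero[of y] that by simp
  qed (simp_all add: open_Compl)
  then show "frechet_derivative \<phi> (at x) = (\<lambda>_. 0)"
    by (rule frechet_derivative_at[symmetric])
qed

lemma bounded_continuous_compact_support:
  fixes g :: "'a::euclidean_space \<Rightarrow> real"
  assumes "continuous_on UNIV g" "compact K" "\<And>x. x \<notin> K \<Longrightarrow> g x = 0"
  shows "\<exists>M. \<forall>x. \<bar>g x\<bar> \<le> M"
proof -
  have "compact (g ` K)"
    using assms by (intro compact_continuous_image) (auto intro: continuous_on_subset)
  then obtain B where B: "\<forall>y\<in>g ` K. norm y \<le> B"
    using compact_imp_bounded bounded_iff by metis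
  have "\<bar>g x\<bar> \<le> max B 0" for x
    using B assms(3)[of x] by (cases "x \<in> K") force+
  then show ?thesis by blast
qed

lemma test_fun_bounded:
  assumes "test_fun U \<phi>"
  shows "\<exists>M. \<forall>x. \<bar>\<phi> x\<bar> \<le> M" "\<exists>M. \<forall>x. \<bar>frechet_derivative \<phi> (at x) v\<bar> \<le> M"
proof -
  let ?K = "closure {x. \<phi> x \<noteq> 0}"
  have K: "compact ?K" using assms by (simp add: test_fun_def)
  show "\<exists>M. \<forall>x. \<bar>\<phi> x\<bar> \<le> M"
    using bounded_continuous_compact_support[OF continuous_on_test_fun[OF assms] K
        test_fun_outside_support(1)[OF assms]] .
  have "frechet_derivative \<phi> (at x) v = 0" if "x \<notin> ?K" for x
    using test_fun_outside_support(2)[OF assms that] by simp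
  then show "\<exists>M. \<forall>x. \<bar>frechet_derivative \<phi> (at x) v\<bar> \<le> M"
    by (rule bounded_continuous_compact_support[OF continuous_on_test_fun_derivative[OF assms] K])
qed

lemma has_real_derivative_test_fun_line:
  assumes "test_fun U \<phi>"
  shows "((\<lambda>s. \<phi> (x + s *\<^sub>R b)) has_real_derivative frechet_derivative \<phi> (at (x + t *\<^sub>R b)) b) (at t)"
proof -
  let ?D = "frechet_derivative \<phi> (at (x + t *\<^sub>R b))"
  have lin: "linear ?D"
    using test_fun_has_derivative[OF assms] has_derivative_linear by blast
  have "((\<lambda>s. x + s *\<^sub>R b) has_derivative (\<lambda>h. h *\<^sub>R b)) (at t)"
    by (auto intro!: derivative_eq_intros)
  from has_derivative_compose[OF this test_fun_has_derivative[OF assms]]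
  have "((\<lambda>s. \<phi> (x + s *\<^sub>R b)) has_derivative (\<lambda>h. ?D (h *\<^sub>R b))) (at t)"
    by (simp add: o_def)
  moreover have "(\<lambda>h. ?D (h *\<^sub>R b)) = (*) (?D b)"
    using linear_scale[OF lin] by (simp add: fun_eq_iff mult.commute)
  ultimately show ?thesis
    unfolding has_field_derivative_def by (rule has_derivative_eq_rhs)
qed

lemma integrable_bounded_compact_support:
  fixes h :: "'a::euclidean_space \<Rightarrow> real"
  assumes "h \<in> borel_measurable borel" "compact K" "\<And>x. \<bar>h x\<bar> \<le> B * indicator K x"
  shows "integrable lborel h"
proof (rule Bochner_Integration.integrable_bound)
  show "integrable lborel (\<lambda>x. B * indicator K x :: real)"
    using assms(2) emeasure_compact_finite[OF assms(2)]
    by (intro integrable_mult_right integrable_real_indicator) (auto intro: borel_closed compact_imp_closed)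
  show "AE x in lborel. norm (h x) \<le> norm (B * indicator K x :: real)"
    using assms(3) by (auto intro: order_trans[OF _ abs_ge_self])
qed (use assms(1) in simp)

lemma lborel_integral_translate_diff_eq_0:
  fixes g :: "'a::euclidean_space \<Rightarrow> real"
  assumes "integrable lborel g"
  shows "(\<integral>x. g (x + v) - g x \<partial>lborel) = 0"
proof -
  have g: "g \<in> borel_measurable borel" using assms by simp
  have "integrable (distr lborel borel ((+) v)) g"
    using assms by (simp add: lborel_distr_plus)
  then have "integrable lborel (\<lambda>x. g (v + x))"
    using g by (simp add: integrable_distr_eq)
  moreover have "(\<integral>x. g (v + x) \<partial>lborel) = (\<integral>x. g x \<partial>distr lborel borel ((+) v))"
    using g by (intro integral_distr[symmetric]) auto
  then have "(\<integral>x. g (v + x) \<partial>lborel) = (\<integral>x. g x \<partial>lborel)"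
    by (simp add: lborel_distr_plus)
  ultimately show ?thesis
    using assms by (simp add: add.commute)
qed

lemma abs_diff_le_line_derivative_bound:
  fixes g g' :: "'a::real_vector \<Rightarrow> real"
  assumes "\<And>t. ((\<lambda>s. g (x + s *\<^sub>R b)) has_real_derivative g' (x + t *\<^sub>R b)) (at t)"
    and "\<And>y. \<bar>g' y\<bar> \<le> C" and "0 < h"
  shows "\<bar>g (x + h *\<^sub>R b) - g x\<bar> \<le> C * h"
proof -
  obtain t where "g (x + h *\<^sub>R b) - g (x + 0 *\<^sub>R b) = (h - 0) * g' (x + t *\<^sub>R b)"
    using MVT2[OF assms(3) assms(1)] by blast
  then have "\<bar>g (x + h *\<^sub>R b) - g x\<bar> = h * \<bar>g' (x + t *\<^sub>R b)\<bar>"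
    using assms(3) by (simp add: abs_mult)
  also have "\<dots> \<le> h * C"
    using assms(2,3) by (intro mult_left_mono) auto
  finally show ?thesis by (simp add: mult.commute)
qed

lemma notin_sums_cball:
  fixes K :: "'a::real_normed_vector set"
  assumes "x \<notin> {y + w | y w. y \<in> K \<and> w \<in> cball 0 r}" "norm v \<le> r"
  shows "x \<notin> K" "x + v \<notin> K"
proof
  assume "x \<in> K"
  moreover have "0 \<in> cball 0 r" using assms(2) norm_ge_zero[of v] by (simp del: norm_ge_zero)
  ultimately have "x + 0 \<in> {y + w | y w. y \<in> K \<and> w \<in> cball 0 r}" by blast
  then show False using assms(1) by simp
next
  show "x + v \<notin> K"
  proof
    assume "x + v \<in> K"
    moreover have "- v \<in> cball 0 r" using assms(2) by simp
    ultimately have "(x + v) + - v \<in> {y + w | y w. y \<in> K \<and> w \<in> cball 0 r}" by blast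
    then show False using assms(1) by simp
  qed
qed

text \<open>The integral of a derivative along the lines of direction \<open>b\<close> vanishes: it is the limit
  of the integrals of the difference quotients, which vanish by translation invariance.\<close>
lemma lborel_integral_line_derivative_eq_0:
  fixes g g' :: "'a::euclidean_space \<Rightarrow> real"
  assumes g: "g \<in> borel_measurable borel" "compact K" "\<And>x. x \<notin> K \<Longrightarrow> g x = 0" "\<And>x. \<bar>g x\<bar> \<le> B"
    and g': "g' \<in> borel_measurable borel" "\<And>x. \<bar>g' x\<bar> \<le> C"
    and deriv: "\<And>x t. ((\<lambda>s. g (x + s *\<^sub>R b)) has_real_derivative g' (x + t *\<^sub>R b)) (at t)"
  shows "(\<integral>x. g' x \<partial>lborel) = 0"
proof -
  define K' where "K' = {y + w | y w. y \<in> K \<and> w \<in> cball 0 (norm b)}"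
  have K': "compact K'" unfolding K'_def by (intro compact_sums g(2) compact_cball)
  define h where "h n = inverse (real (Suc n))" for n
  have h: "0 < h n" "h n \<le> 1" for n by (auto simp: h_def field_simps)
  define q where "q n x = (g (x + h n *\<^sub>R b) - g x) / h n" for n x
  have outside: "g x = 0" "g (x + h n *\<^sub>R b) = 0" if "x \<notin> K'" for x n
    using notin_sums_cball[OF that[unfolded K'_def], of "h n *\<^sub>R b"] h[of n] g(3)
    by (simp_all add: mult_left_le_one_le)
  have q_bound: "\<bar>q n x\<bar> \<le> C * indicator K' x" for n x
  proof (cases "x \<in> K'")
    case True
    have "\<bar>q n x\<bar> = \<bar>g (x + h n *\<^sub>R b) - g x\<bar> / h n" using h[of n] by (simp add: q_def)
    also have "\<dots> \<le> C"
      using abs_diff_le_line_derivative_bound[OF deriv g'(2) h(1)] h[of n] by (simp add: field_simps)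
    finally show ?thesis using True by simp
  qed (simp add: q_def outside)
  have q_lim: "(\<lambda>n. q n x) \<longlonglongrightarrow> g' x" for x
  proof -
    have "((\<lambda>s. (g (x + s *\<^sub>R b) - g x) / s) \<longlongrightarrow> g' x) (at 0)"
      using deriv[of x 0] unfolding has_field_derivative_iff by simp
    moreover have "filterlim h (at 0) sequentially"
      unfolding filterlim_at h_def using LIMSEQ_inverse_real_of_nat by auto
    ultimately show ?thesis unfolding q_def by (rule filterlim_compose)
  qed
  have "integrable lborel g"
    by (rule integrable_bounded_compact_support[OF g(1,2), of B]) (use g(3,4) in \<open>auto split: split_indicator\<close>)
  then have q_int: "(\<integral>x. q n x \<partial>lborel) = 0" for n
    unfolding q_def using lborel_integral_translate_diff_eq_0[of g "h n *\<^sub>R b"] by simp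
  have "(\<lambda>n. \<integral>x. q n x \<partial>lborel) \<longlonglongrightarrow> (\<integral>x. g' x \<partial>lborel)"
  proof (rule integral_dominated_convergence[where w="\<lambda>x. C * indicator K' x"])
    show "integrable lborel (\<lambda>x. C * indicator K' x)"
      using K' emeasure_compact_finite[OF K']
      by (intro integrable_mult_right integrable_real_indicator) (auto intro: borel_closed compact_imp_closed)
  qed (use g g' q_lim q_bound in \<open>auto simp: q_def\<close>)
  then show ?thesis using q_int by (simp add: LIMSEQ_const_iff)
qed

lemma lborel_integral_test_fun_by_parts:
  fixes f f' :: "'a::euclidean_space \<Rightarrow> real"
  assumes \<phi>: "test_fun U \<phi>"
    and f: "f \<in> borel_measurable borel" "\<And>x. \<bar>f x\<bar> \<le> B"
    and f': "f' \<in> borel_measurable borel" "\<And>x. \<bar>f' x\<bar> \<le> B'"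
    and deriv: "\<And>x t. ((\<lambda>s. f (x + s *\<^sub>R b)) has_real_derivative f' (x + t *\<^sub>R b)) (at t)"
  shows "(\<integral>x. f x * frechet_derivative \<phi> (at x) b \<partial>lborel) = - (\<integral>x. \<phi> x * f' x \<partial>lborel)"
proof -
  define K where "K = closure {x. \<phi> x \<noteq> 0}"
  have K: "compact K" using \<phi> by (simp add: test_fun_def K_def)
  define D where "D x = frechet_derivative \<phi> (at x) b" for x
  obtain M where M: "\<And>x. \<bar>\<phi> x\<bar> \<le> M"
    using test_fun_bounded(1)[OF \<phi>] by blast
  obtain M' where M': "\<And>x. \<bar>D x\<bar> \<le> M'"
    using test_fun_bounded(2)[OF \<phi>, where v=b] by (auto simp: D_def)
  have zero: "\<phi> x = 0" "D x = 0" if "x \<notin> K" for x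
    using test_fun_outside_support[OF \<phi> that[unfolded K_def]] by (simp_all add: D_def)
  have B: "0 \<le> B" "0 \<le> B'" using f(2)[of 0] f'(2)[of 0] by linarith+
  have meas: "\<phi> \<in> borel_measurable borel" "D \<in> borel_measurable borel"
    unfolding D_def using \<phi> by (simp_all add: borel_measurable_test_fun borel_measurable_test_fun_derivative)
  have bound: "\<bar>u x * v x\<bar> \<le> A * A' * indicator K x"
    if "\<And>x. \<bar>u x\<bar> \<le> A" "\<And>x. \<bar>v x\<bar> \<le> A'" "0 \<le> A'" "\<And>x. x \<notin> K \<Longrightarrow> u x = 0" for u v :: "'a \<Rightarrow> real" and A A' x
    using that(1)[of x] that(2)[of x] that(3,4) abs_ge_zero[of "u x"]
    by (cases "x \<in> K") (auto simp: abs_mult intro!: mult_mono)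
  have int1: "integrable lborel (\<lambda>x. D x * f x)"
    by (rule integrable_bounded_compact_support[OF _ K bound[OF M' f(2) B(1) zero(2)]]) (use meas f in simp)
  have int2: "integrable lborel (\<lambda>x. \<phi> x * f' x)"
    by (rule integrable_bounded_compact_support[OF _ K bound[OF M f'(2) B(2) zero(1)]]) (use meas f' in simp)
  have "(\<integral>x. D x * f x + \<phi> x * f' x \<partial>lborel) = 0"
  proof (rule lborel_integral_line_derivative_eq_0[OF _ K])
    show "\<bar>\<phi> x * f x\<bar> \<le> M * B" for x
      using M[of x] f(2)[of x] B by (simp add: abs_mult mult_mono)
    show "\<bar>D x * f x + \<phi> x * f' x\<bar> \<le> M' * B + M * B'" for x
      using M[of x] M'[of x] f(2)[of x] f'(2)[of x] B
      by (auto simp: abs_mult intro!: order_trans[OF abs_triangle_ineq] add_mono mult_mono)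
    show "((\<lambda>s. \<phi> (x + s *\<^sub>R b) * f (x + s *\<^sub>R b)) has_real_derivative
        D (x + t *\<^sub>R b) * f (x + t *\<^sub>R b) + \<phi> (x + t *\<^sub>R b) * f' (x + t *\<^sub>R b)) (at t)" for x t
      using DERIV_mult[OF has_real_derivative_test_fun_line[OF \<phi>] deriv] by (simp add: D_def mult.commute)
  qed (use meas f f' zero in auto)
  then show ?thesis
    using int1 int2 by (simp add: D_def mult.commute)
qed

text \<open>Lattice points of \<open>\<int>^m\<close> are functions \<open>Basis \<Rightarrow> int\<close>, extended by \<open>0\<close> off \<open>Basis\<close>;
  \<open>cube \<delta> z\<close> is the closed cube of side \<open>\<delta>\<close> with lowest corner \<open>\<delta> z\<close>.\<close>
definition cube :: "real \<Rightarrow> ('a::euclidean_space \<Rightarrow> int) \<Rightarrow> 'a set" where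
  "cube \<delta> z = {x. \<forall>c\<in>Basis. \<delta> * z c \<le> x \<bullet> c \<and> x \<bullet> c \<le> \<delta> * z c + \<delta>}"

lemma cube_eq_cbox:
  "cube \<delta> z = cbox (\<Sum>c\<in>Basis. (\<delta> * z c) *\<^sub>R c) (\<Sum>c\<in>Basis. (\<delta> * z c + \<delta>) *\<^sub>R c)"
  by (auto simp: cube_def mem_box inner_sum_left_Basis)

lemma sets_cube [measurable]: "cube \<delta> z \<in> sets borel"
  unfolding cube_eq_cbox by simp

lemma emeasure_cube:
  "\<delta> > 0 \<Longrightarrow> emeasure lborel (cube \<delta> z :: 'a::euclidean_space set) = ennreal (\<delta> ^ DIM('a))"
  unfolding cube_eq_cbox
  by (subst emeasure_lborel_cbox) (auto simp: inner_diff_left inner_sum_left_Basis)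

lemma obtain_cube_containing:
  fixes x :: "'a::euclidean_space"
  assumes "\<delta> > 0"
  obtains z where "\<forall>c. c \<notin> Basis \<longrightarrow> z c = 0" "x \<in> cube \<delta> z" "cube \<delta> z \<subseteq> cball x (\<delta> * DIM('a))"
proof
  define z where "z = (\<lambda>c. if c \<in> Basis then \<lfloor>x \<bullet> c / \<delta>\<rfloor> else 0)"
  show "\<forall>c. c \<notin> Basis \<longrightarrow> z c = 0" by (simp add: z_def)
  have lo: "\<delta> * z c \<le> x \<bullet> c" and hi: "x \<bullet> c < \<delta> * z c + \<delta>" if "c \<in> Basis" for c
  proof -
    have "\<delta> * \<lfloor>x \<bullet> c / \<delta>\<rfloor> \<le> \<delta> * (x \<bullet> c / \<delta>)"
      using assms(1) of_int_floor_le by (intro mult_left_mono) auto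
    then show "\<delta> * z c \<le> x \<bullet> c" using assms(1) that by (simp add: z_def)
    have "x \<bullet> c / \<delta> < real_of_int \<lfloor>x \<bullet> c / \<delta>\<rfloor> + 1" by (rule real_of_int_floor_add_one_gt)
    then show "x \<bullet> c < \<delta> * z c + \<delta>" using assms(1) that by (simp add: z_def field_simps)
  qed
  show "x \<in> cube \<delta> z" using lo hi by (auto simp: cube_def less_imp_le)
  show "cube \<delta> z \<subseteq> cball x (\<delta> * DIM('a))"
  proof
    fix y assume y: "y \<in> cube \<delta> z"
    have "\<bar>(x - y) \<bullet> c\<bar> \<le> \<delta>" if "c \<in> Basis" for c
      using y lo[OF that] hi[OF that] that by (auto simp: cube_def inner_diff_left abs_le_iff)
    then have "(\<Sum>c\<in>Basis. \<bar>(x - y) \<bullet> c\<bar>) \<le> (\<Sum>c\<in>(Basis::'a set). \<delta>)"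
      by (rule sum_mono)
    then have "norm (x - y) \<le> (\<Sum>c\<in>(Basis::'a set). \<delta>)"
      using norm_le_l1[of "x - y"] by linarith
    then show "y \<in> cball x (\<delta> * DIM('a))" by (simp add: dist_norm mult.commute)
  qed
qed

lemma UN_interior_inner_parallel_sets:
  fixes U :: "'a::metric_space set"
  assumes "open U"
  shows "(\<Union>k. interior {x. cball x (1 / Suc k) \<subseteq> U}) = U"
proof
  show "(\<Union>k. interior {x. cball x (1 / Suc k) \<subseteq> U}) \<subseteq> U"
  proof clarify
    fix x k assume "x \<in> interior {x. cball x (1 / Suc k) \<subseteq> U}"
    then have "cball x (1 / Suc k) \<subseteq> U" using interior_subset by blast
    moreover have "x \<in> cball x (1 / Suc k)" by simp
    ultimately show "x \<in> U" by blast
  qed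
  show "U \<subseteq> (\<Union>k. interior {x. cball x (1 / Suc k) \<subseteq> U})"
  proof
    fix x assume "x \<in> U"
    then obtain e where e: "e > 0" "ball x e \<subseteq> U" using assms open_contains_ball by blast
    obtain k where k: "1 / Suc k < e / 2" using reals_Archimedean[of "e / 2"] e by (auto simp: inverse_eq_divide)
    have "ball x (e / 2) \<subseteq> {y. cball y (1 / Suc k) \<subseteq> U}"
    proof clarify
      fix y w assume "y \<in> ball x (e / 2)" "w \<in> cball y (1 / Suc k)"
      then have "dist x w < e" using k dist_triangle[of x w y] by (simp add: dist_commute)
      then show "w \<in> U" using e by auto
    qed
    then have "ball x (e / 2) \<subseteq> interior {y. cball y (1 / Suc k) \<subseteq> U}" by (rule interior_maximal) simp
    moreover have "x \<in> ball x (e / 2)" using e by simp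
    ultimately show "x \<in> (\<Union>k. interior {x. cball x (1 / Suc k) \<subseteq> U})" by blast
  qed
qed

lemma SUP_emeasure_inner_parallel_sets:
  fixes U :: "'a::euclidean_space set"
  assumes "open U"
  shows "(SUP k. emeasure lborel (interior {x. cball x (1 / Suc k) \<subseteq> U})) = emeasure lborel U"
proof -
  have "incseq (\<lambda>k. interior {x. cball x (1 / Suc k) \<subseteq> U})"
  proof (rule incseq_SucI)
    fix k
    have "1 / real (Suc (Suc k)) \<le> 1 / real (Suc k)"
      by (intro divide_left_mono) auto
    then have "cball x (1 / Suc (Suc k)) \<subseteq> cball x (1 / Suc k)" for x
      by (rule subset_cball)
    then have "{x. cball x (1 / Suc k) \<subseteq> U} \<subseteq> {x. cball x (1 / Suc (Suc k)) \<subseteq> U}"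
      by blast
    then show "interior {x. cball x (1 / Suc k) \<subseteq> U} \<subseteq> interior {x. cball x (1 / Suc (Suc k)) \<subseteq> U}"
      by (rule interior_mono)
  qed
  then show ?thesis
    using UN_interior_inner_parallel_sets[OF assms] by (subst SUP_emeasure_incseq) auto
qed

lemma emeasure_le_card_mult_cube_volume:
  fixes V :: "'a::euclidean_space set"
  assumes "finite T" "\<delta> > 0" "V \<subseteq> (\<Union>z\<in>T. cube \<delta> z)"
  shows "emeasure lborel V \<le> ennreal (real (card T) * \<delta> ^ DIM('a))"
proof -
  have "emeasure lborel V \<le> emeasure lborel (\<Union>z\<in>T. cube \<delta> z)"
    using assms(1) by (intro emeasure_mono[OF assms(3)] sets.finite_UN) auto
  also have "\<dots> \<le> (\<Sum>z\<in>T. emeasure lborel (cube \<delta> z))"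
    by (rule emeasure_subadditive_finite[OF assms(1)]) auto
  also have "\<dots> = ennreal (real (card T) * \<delta> ^ DIM('a))"
    using assms(2) by (simp add: emeasure_cube ennreal_of_nat_eq_real_of_nat ennreal_mult)
  finally show ?thesis .
qed

lemma large_cube_family:
  fixes U :: "'a::euclidean_space set"
  assumes "open U" "emeasure lborel U = \<infinity>"
  obtains \<delta> S where "\<delta> > 0" "finite S" "\<forall>z\<in>S. \<forall>c. c \<notin> Basis \<longrightarrow> z c = 0"
    "\<forall>z\<in>S. cube \<delta> z \<subseteq> U" "A \<le> real (card S) * \<delta> ^ DIM('a)"
proof -
  define V where "V k = interior {x. cball x (1 / Suc k) \<subseteq> U}" for k
  have "ennreal (max 0 A) < (SUP k. emeasure lborel (V k))"
    unfolding V_def SUP_emeasure_inner_parallel_sets[OF assms(1)] assms(2) by simp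
  then obtain k where k: "ennreal (max 0 A) < emeasure lborel (V k)"
    unfolding less_SUP_iff by blast
  define \<delta> where "\<delta> = 1 / (real (Suc k) * DIM('a))"
  have \<delta>: "\<delta> > 0" unfolding \<delta>_def by (intro divide_pos_pos mult_pos_pos) auto
  define T where "T = {z. (\<forall>c. c \<notin> Basis \<longrightarrow> z c = 0) \<and> cube \<delta> z \<subseteq> U}"
  have T: "\<forall>z\<in>T. \<forall>c. c \<notin> Basis \<longrightarrow> z c = 0" "\<forall>z\<in>T. cube \<delta> z \<subseteq> U"
    by (simp_all add: T_def)
  have cover: "V k \<subseteq> (\<Union>z\<in>T. cube \<delta> z)"
  proof
    fix x assume "x \<in> V k"
    then have "cball x (\<delta> * DIM('a)) \<subseteq> U"
      unfolding V_def \<delta>_def using interior_subset by auto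
    moreover obtain z where "\<forall>c. c \<notin> Basis \<longrightarrow> z c = 0" "x \<in> cube \<delta> z" "cube \<delta> z \<subseteq> cball x (\<delta> * DIM('a))"
      using obtain_cube_containing[OF \<delta>] by blast
    ultimately show "x \<in> (\<Union>z\<in>T. cube \<delta> z)"
      unfolding T_def by blast
  qed
  show ?thesis
  proof (cases "finite T")
    case True
    have "ennreal (max 0 A) < ennreal (real (card T) * \<delta> ^ DIM('a))"
      using k emeasure_le_card_mult_cube_volume[OF True \<delta> cover] by (rule order.strict_trans2)
    then have "max 0 A < real (card T) * \<delta> ^ DIM('a)"
      using ennreal_less_iff[of "max 0 A"] by simp
    then show ?thesis by (intro that[OF \<delta> True T]) simp
  next
    case False
    obtain N :: nat where N: "A / \<delta> ^ DIM('a) \<le> N" using real_arch_simple by blast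
    obtain S where S: "S \<subseteq> T" "finite S" "card S = N"
      using infinite_arbitrarily_large[OF False] by blast
    have "A \<le> real (card S) * \<delta> ^ DIM('a)"
      using N S(3) \<delta> by (simp add: field_simps)
    moreover have "\<forall>z\<in>S. \<forall>c. c \<notin> Basis \<longrightarrow> z c = 0" "\<forall>z\<in>S. cube \<delta> z \<subseteq> U"
      using T S(1) by blast+
    ultimately show ?thesis by (intro that[OF \<delta> S(2)])
  qed
qed

lemma emeasure_density_restrict_space_lborel:
  fixes d :: "'a::euclidean_space \<Rightarrow> real"
  assumes "U \<in> sets borel" "d \<in> borel_measurable borel" "\<And>x. x \<notin> U \<Longrightarrow> d x = 0"
  shows "emeasure (density (restrict_space lborel U) d) U = (\<integral>\<^sup>+x. ennreal (d x) \<partial>lborel)"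
proof -
  have "d \<in> borel_measurable (restrict_space lborel U)"
    using assms(2) by (simp add: measurable_restrict_space1)
  then have "emeasure (density (restrict_space lborel U) d) U
      = (\<integral>\<^sup>+x. ennreal (d x) * indicator U x * indicator U x \<partial>lborel)"
    using assms(1) by (simp add: emeasure_density nn_integral_restrict_space sets_restrict_space_iff)
  also have "(\<lambda>x. ennreal (d x) * indicator U x * indicator U x) = (\<lambda>x. ennreal (d x))"
    using assms(3) by (auto simp: fun_eq_iff split: split_indicator)
  finally show ?thesis .
qed

lemma integral_density_restrict_space_lborel:
  fixes d f :: "'a::euclidean_space \<Rightarrow> real"
  assumes "U \<in> sets borel" "d \<in> borel_measurable borel" "\<And>x. 0 \<le> d x" "\<And>x. x \<notin> U \<Longrightarrow> d x = 0"
    and "f \<in> borel_measurable borel"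
  shows "(\<integral>x. f x \<partial>density (restrict_space lborel U) d) = (\<integral>x. f x * d x \<partial>lborel)"
proof -
  have "(\<integral>x. f x \<partial>density (restrict_space lborel U) d) = (\<integral>x. d x *\<^sub>R f x \<partial>restrict_space lborel U)"
    using assms(2,3,5) by (intro integral_density) (auto simp: measurable_restrict_space1)
  also have "\<dots> = (\<integral>x. indicator U x *\<^sub>R (d x *\<^sub>R f x) \<partial>lborel)"
    using assms(1) by (intro integral_restrict_space) simp_all
  also have "(\<lambda>x. indicator U x *\<^sub>R (d x *\<^sub>R f x)) = (\<lambda>x. f x * d x)"
    using assms(4) by (auto simp: fun_eq_iff split: split_indicator)
  finally show ?thesis .
qed

text \<open>The divergence is realised as the measure \<open>d \<cdot> Lebesgue\<close> on \<open>U\<close>, with zero negative part.\<close>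
lemma anexometer_ge_divergence_mass:
  fixes U :: "'a::euclidean_space set" and u :: "'a \<Rightarrow> 'a"
  assumes "open U"
    and u: "u \<in> borel_measurable borel" "\<And>x. norm (u x) \<le> 1"
    and d: "d \<in> borel_measurable borel" "\<And>x. 0 \<le> d x" "\<And>x. x \<notin> U \<Longrightarrow> d x = 0"
    and mass: "(\<integral>\<^sup>+x. ennreal (d x) \<partial>lborel) = ennreal V" "0 \<le> V"
    and div: "\<And>\<phi>. test_fun U \<phi> \<Longrightarrow>
      (LINT x:U|lebesgue. frechet_derivative \<phi> (at x) (u x)) = - (\<integral>x. \<phi> x * d x \<partial>lborel)"
  shows "ereal V \<le> anexometer U"
proof -
  define M where "M = restrict_space lborel U"
  define \<mu> where "\<mu> = density M (\<lambda>x. ennreal (d x))"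
  have U: "U \<in> sets borel" using assms(1) by simp
  have \<mu>_U: "emeasure \<mu> U = ennreal V"
    unfolding \<mu>_def M_def using emeasure_density_restrict_space_lborel[OF U d(1,3)] mass(1) by simp
  have "sets M = sets (restrict_space borel U)"
    unfolding M_def by (rule sets_restrict_space_cong) simp
  then have "fin_borel_on U \<mu>" "fin_borel_on U (null_measure M)"
    unfolding fin_borel_on_def using \<mu>_U
    by (auto simp: \<mu>_def M_def space_restrict_space intro!: finite_measureI)
  moreover have "(LINT x|\<mu>. \<phi> x) = (\<integral>x. \<phi> x * d x \<partial>lborel)" if "test_fun U \<phi>" for \<phi>
    unfolding \<mu>_def M_def
    by (rule integral_density_restrict_space_lborel[OF U d borel_measurable_test_fun[OF that]])
  moreover have "u \<in> borel_measurable (restrict_space lebesgue U)"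
    using u(1) by (simp add: measurable_completion measurable_restrict_space1)
  ultimately have "div_measure U u \<mu> (null_measure M)"
    unfolding div_measure_def using u(2) div by auto
  then have "ereal (measure \<mu> U - measure (null_measure M) U) \<le> anexometer U"
    unfolding anexometer_def using u(2) by (intro Sup_upper) blast
  then show ?thesis
    using \<mu>_U mass(2) by (simp add: measure_def)
qed

lemma sum_if_unique_between:
  fixes h :: "'b \<Rightarrow> real"
  assumes "finite R" "\<And>z z'. z \<in> R \<Longrightarrow> z' \<in> R \<Longrightarrow> P z \<Longrightarrow> P z' \<Longrightarrow> z = z'"
    and "\<And>z. z \<in> R \<Longrightarrow> P z \<Longrightarrow> lo \<le> h z \<and> h z \<le> hi" "lo \<le> 0" "0 \<le> hi"
  shows "lo \<le> (\<Sum>z\<in>R. if P z then h z else 0) \<and> (\<Sum>z\<in>R. if P z then h z else 0) \<le> hi"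
proof -
  have sum: "(\<Sum>z\<in>R. if P z then h z else 0) = (\<Sum>z\<in>{z\<in>R. P z}. h z)"
    using assms(1) by (simp add: sum.inter_filter)
  show ?thesis
  proof (cases "{z\<in>R. P z} = {}")
    case True
    then show ?thesis using sum assms(4,5) by simp
  next
    case False
    then obtain z0 where z0: "z0 \<in> R" "P z0" by blast
    then have "{z\<in>R. P z} = {z0}" using assms(2) by blast
    then show ?thesis using sum assms(3)[OF z0] by simp
  qed
qed

text \<open>\<open>R\<close> is a family of lattice cubes of side \<open>\<delta>\<close>, no two in the same column parallel to \<open>b\<close>
  (injectivity of \<open>\<lambda>z. z(b := 0)\<close>). Columns are half-open
  in the transverse directions, so that distinct ones are disjoint.\<close>
locale cube_columns =
  fixes \<delta> :: real and b :: "'a::euclidean_space" and R :: "('a \<Rightarrow> int) set"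
  assumes delta_pos: "\<delta> > 0" and b_Basis: "b \<in> Basis" and finite_R: "finite R"
    and R_lattice: "\<forall>z\<in>R. \<forall>c. c \<notin> Basis \<longrightarrow> z c = 0"
    and inj_on_R: "inj_on (\<lambda>z. z(b := 0)) R"
begin

definition in_column :: "('a \<Rightarrow> int) \<Rightarrow> 'a \<Rightarrow> bool" where
  "in_column z x \<longleftrightarrow> (\<forall>c\<in>Basis. c \<noteq> b \<longrightarrow> \<delta> * z c \<le> x \<bullet> c \<and> x \<bullet> c < \<delta> * z c + \<delta>)"

definition height :: "('a \<Rightarrow> int) \<Rightarrow> 'a \<Rightarrow> real" where
  "height z x = (x \<bullet> b - \<delta> * z b) / \<delta>"

definition column_field :: "'a \<Rightarrow> real" where
  "column_field x = (\<Sum>z\<in>R. if in_column z x then cos_step (height z x) else 0)"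

definition column_density :: "'a \<Rightarrow> real" where
  "column_density x = (\<Sum>z\<in>R. if in_column z x then cos_step' (height z x) / \<delta> else 0)"

lemma in_column_unique:
  assumes "z \<in> R" "z' \<in> R" "in_column z x" "in_column z' x"
  shows "z = z'"
proof -
  have in_Basis: "z c = z' c" if "c \<in> Basis" "c \<noteq> b" for c
  proof -
    have "\<delta> * z c \<le> x \<bullet> c" "x \<bullet> c < \<delta> * z c + \<delta>" "\<delta> * z' c \<le> x \<bullet> c" "x \<bullet> c < \<delta> * z' c + \<delta>"
      using assms(3,4) that by (auto simp: in_column_def)
    then have "\<delta> * z c < \<delta> * (z' c + 1)" "\<delta> * z' c < \<delta> * (z c + 1)"
      by (simp_all add: algebra_simps)
    then have "real_of_int (z c) < z' c + 1" "real_of_int (z' c) < z c + 1"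
      using delta_pos by (simp_all add: mult_less_cancel_left_pos)
    then show ?thesis by linarith
  qed
  have not_in_Basis: "z c = z' c" if "c \<notin> Basis" for c
    using bspec[OF R_lattice assms(1)] bspec[OF R_lattice assms(2)] that by simp
  have "z(b := 0) = z'(b := 0)"
  proof (rule ext)
    fix c show "(z(b := 0)) c = (z'(b := 0)) c"
      using in_Basis[of c] not_in_Basis[of c] by (cases "c = b") auto
  qed
  then show ?thesis using inj_on_R assms(1,2) by (auto dest: inj_onD)
qed

lemma abs_column_field_le: "\<bar>column_field x\<bar> \<le> 1"
proof -
  have "-1 \<le> column_field x \<and> column_field x \<le> 1"
    unfolding column_field_def
    by (rule sum_if_unique_between[OF finite_R in_column_unique])
       (use abs_cos_step_le in \<open>auto simp: abs_le_iff\<close>)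
  then show ?thesis by linarith
qed

lemma column_density_between: "0 \<le> column_density x \<and> column_density x \<le> pi / \<delta>"
  unfolding column_density_def
  by (rule sum_if_unique_between[OF finite_R in_column_unique])
     (use cos_step'_nonneg cos_step'_le_pi delta_pos in \<open>auto intro: divide_right_mono\<close>)

lemma in_column_shift: "in_column z (x + s *\<^sub>R b) = in_column z x"
  unfolding in_column_def using b_Basis by (auto simp: inner_add_left inner_Basis)

lemma height_shift: "height z (x + s *\<^sub>R b) = height z x + s / \<delta>"
  unfolding height_def using b_Basis delta_pos by (simp add: inner_add_left field_simps)

lemma has_real_derivative_column_field:
  "((\<lambda>s. column_field (x + s *\<^sub>R b)) has_real_derivative column_density (x + t *\<^sub>R b)) (at t)"
proof -
  have "((\<lambda>s. cos_step (height z x + s / \<delta>)) has_real_derivative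
      cos_step' (height z x + t / \<delta>) * (1 / \<delta>)) (at t)" for z
    by (rule DERIV_chain'[OF _ has_real_derivative_cos_step])
       (use delta_pos in \<open>auto intro!: derivative_eq_intros\<close>)
  then have "((\<lambda>s. if in_column z x then cos_step (height z x + s / \<delta>) else 0) has_real_derivative
      (if in_column z x then cos_step' (height z x + t / \<delta>) / \<delta> else 0)) (at t)" for z
    by (cases "in_column z x") simp_all
  then show ?thesis
    unfolding column_field_def column_density_def in_column_shift height_shift by (rule DERIV_sum)
qed

lemma borel_measurable_in_column [measurable]: "Measurable.pred borel (in_column z)"
  unfolding in_column_def by measurable

lemma borel_measurable_column_field [measurable]: "column_field \<in> borel_measurable borel"
  unfolding column_field_def height_def by measurable

lemma borel_measurable_column_density [measurable]: "column_density \<in> borel_measurable borel"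
  unfolding column_density_def height_def by measurable

lemma column_density_outside_cubes:
  assumes "\<forall>z\<in>R. x \<notin> cube \<delta> z"
  shows "column_density x = 0"
  unfolding column_density_def
proof (rule sum.neutral, rule ballI)
  fix z assume z: "z \<in> R"
  have "cos_step' (height z x) = 0" if "in_column z x"
  proof (rule cos_step'_eq_0)
    have "\<not> (\<delta> * z b < x \<bullet> b \<and> x \<bullet> b < \<delta> * z b + \<delta>)"
      using that assms z by (force simp: cube_def in_column_def)
    then show "height z x \<le> 0 \<or> 1 \<le> height z x"
      using delta_pos by (auto simp: height_def field_simps)
  qed
  then show "(if in_column z x then cos_step' (height z x) / \<delta> else 0) = 0" by simp
qed

lemma column_term_eq_prod:
  "ennreal (if in_column z x then cos_step' (height z x) / \<delta> else 0)
    = (\<Prod>c\<in>Basis. if c = b then ennreal (cos_step' ((x \<bullet> c - \<delta> * z b) / \<delta>) / \<delta>)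
                   else indicator {\<delta> * z c ..< \<delta> * z c + \<delta>} (x \<bullet> c))"
  (is "_ = (\<Prod>c\<in>Basis. ?h c (x \<bullet> c))")
proof -
  have "(\<Prod>c\<in>Basis - {b}. ?h c (x \<bullet> c)) = (if in_column z x then 1 else 0)"
  proof (cases "in_column z x")
    case True
    then show ?thesis by (auto simp: in_column_def intro!: prod.neutral)
  next
    case False
    then obtain c where "c \<in> Basis - {b}" "?h c (x \<bullet> c) = 0"
      unfolding in_column_def by auto
    then show ?thesis using False by (auto intro: prod_zero)
  qed
  moreover have "(\<Prod>c\<in>Basis. ?h c (x \<bullet> c)) = ?h b (x \<bullet> b) * (\<Prod>c\<in>Basis - {b}. ?h c (x \<bullet> c))"
    by (rule prod.remove[OF finite_Basis b_Basis])
  ultimately show ?thesis by (simp add: height_def)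
qed

lemma nn_integral_column_term:
  "(\<integral>\<^sup>+x. ennreal (if in_column z x then cos_step' (height z x) / \<delta> else 0) \<partial>lborel)
    = ennreal (2 * \<delta> ^ (DIM('a) - 1))"
proof -
  let ?h = "\<lambda>c t. if c = b then ennreal (cos_step' ((t - \<delta> * z b) / \<delta>) / \<delta>)
                   else indicator {\<delta> * z c ..< \<delta> * z c + \<delta>} t"
  have "(\<integral>\<^sup>+x. ennreal (if in_column z x then cos_step' (height z x) / \<delta> else 0) \<partial>lborel)
      = (\<integral>\<^sup>+x. (\<Prod>c\<in>Basis. ?h c (x \<bullet> c)) \<partial>lborel)"
    by (simp only: column_term_eq_prod)
  also have "\<dots> = (\<Prod>c\<in>Basis. \<integral>\<^sup>+t. ?h c t \<partial>lborel)"
    by (rule nn_integral_lborel_prod) auto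
  also have "\<dots> = (\<integral>\<^sup>+t. ?h b t \<partial>lborel) * (\<Prod>c\<in>Basis - {b}. \<integral>\<^sup>+t. ?h c t \<partial>lborel)"
    by (rule prod.remove[OF finite_Basis b_Basis])
  also have "(\<integral>\<^sup>+t. ?h b t \<partial>lborel) = 2"
    using nn_integral_cos_step'_rescaled[OF delta_pos] by simp
  also have "(\<Prod>c\<in>Basis - {b}. \<integral>\<^sup>+t. ?h c t \<partial>lborel) = (\<Prod>c\<in>Basis - {b}. ennreal \<delta>)"
    using delta_pos by (intro prod.cong) auto
  also have "\<dots> = ennreal (\<delta> ^ (DIM('a) - 1))"
    using delta_pos b_Basis by (simp add: prod_ennreal card_Diff_singleton ennreal_power)
  finally show ?thesis
    using delta_pos by (simp add: ennreal_mult)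
qed

lemma nn_integral_column_density:
  "(\<integral>\<^sup>+x. ennreal (column_density x) \<partial>lborel) = ennreal (2 * \<delta> ^ (DIM('a) - 1) * card R)"
proof -
  have "(\<lambda>x. ennreal (column_density x))
      = (\<lambda>x. \<Sum>z\<in>R. ennreal (if in_column z x then cos_step' (height z x) / \<delta> else 0))"
    unfolding column_density_def using cos_step'_nonneg delta_pos by (subst sum_ennreal) auto
  then have "(\<integral>\<^sup>+x. ennreal (column_density x) \<partial>lborel)
      = (\<Sum>z\<in>R. \<integral>\<^sup>+x. ennreal (if in_column z x then cos_step' (height z x) / \<delta> else 0) \<partial>lborel)"
    by (simp only:) (rule nn_integral_sum, unfold height_def, measurable)
  also have "\<dots> = (\<Sum>z\<in>R. ennreal (2 * \<delta> ^ (DIM('a) - 1)))"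
    by (simp only: nn_integral_column_term)
  finally show ?thesis
    using delta_pos by (simp add: ennreal_of_nat_eq_real_of_nat ennreal_mult[symmetric] mult.commute)
qed

lemma column_field_weak_divergence:
  assumes "test_fun U \<phi>"
  shows "(LINT x:U|lebesgue. frechet_derivative \<phi> (at x) (column_field x *\<^sub>R b))
    = - (\<integral>x. \<phi> x * column_density x \<partial>lborel)"
proof -
  have "indicator U x *\<^sub>R frechet_derivative \<phi> (at x) (column_field x *\<^sub>R b)
      = column_field x * frechet_derivative \<phi> (at x) b" for x
  proof (cases "x \<in> U")
    case True
    have "linear (frechet_derivative \<phi> (at x))"
      using test_fun_has_derivative[OF assms] has_derivative_linear by blast
    then show ?thesis using True by (simp add: linear_scale)
  next
    case False
    then have "x \<notin> closure {x. \<phi> x \<noteq> 0}" using assms by (auto simp: test_fun_def)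
    then show ?thesis using False test_fun_outside_support(2)[OF assms] by simp
  qed
  then have "(LINT x:U|lebesgue. frechet_derivative \<phi> (at x) (column_field x *\<^sub>R b))
      = (\<integral>x. column_field x * frechet_derivative \<phi> (at x) b \<partial>lebesgue)"
    unfolding set_lebesgue_integral_def by (simp only:)
  also have "\<dots> = (\<integral>x. column_field x * frechet_derivative \<phi> (at x) b \<partial>lborel)"
    using borel_measurable_test_fun_derivative[OF assms] by (intro integral_completion) measurable
  also have "\<dots> = - (\<integral>x. \<phi> x * column_density x \<partial>lborel)"
    using abs_column_field_le column_density_between has_real_derivative_column_field
    by (intro lborel_integral_test_fun_by_parts[OF assms]) (auto simp: abs_le_iff)
  finally show ?thesis .
qed

lemma anexometer_ge_column_mass:
  assumes "open U" "\<forall>z\<in>R. cube \<delta> z \<subseteq> U"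
  shows "ereal (2 * \<delta> ^ (DIM('a) - 1) * card R) \<le> anexometer U"
proof (rule anexometer_ge_divergence_mass[OF assms(1)])
  show "(\<lambda>x. column_field x *\<^sub>R b) \<in> borel_measurable borel" by measurable
  show "norm (column_field x *\<^sub>R b) \<le> 1" for x
    using abs_column_field_le b_Basis by simp
  show "column_density x = 0" if "x \<notin> U" for x
    using assms(2) that by (intro column_density_outside_cubes) blast
qed (use column_density_between nn_integral_column_density column_field_weak_divergence delta_pos in auto)

end

lemma obtain_inj_on_subset_same_image:
  obtains R where "R \<subseteq> S" "inj_on f R" "f ` R = f ` S"
proof
  show "inv_into S f ` f ` S \<subseteq> S"
    by (auto intro: inv_into_into)
  show "inj_on f (inv_into S f ` f ` S)"
    by (rule inj_onI) (metis f_inv_into_f imageE)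
  show "f ` inv_into S f ` f ` S = f ` S"
    by (force simp: image_image f_inv_into_f)
qed

lemma loomis_whitney_cube_union:
  fixes S :: "('a::euclidean_space \<Rightarrow> int) set" and \<delta> :: real
  assumes "DIM('a) \<ge> 2" "finite S" "\<forall>z\<in>S. \<forall>c. c \<notin> Basis \<longrightarrow> z c = 0"
    and "\<forall>c\<in>Basis. card ((\<lambda>z. z(c := 0)) ` S) \<le> P" and "\<delta> > 0"
  shows "(real (card S) * \<delta> ^ DIM('a)) ^ (DIM('a) - 1)
    \<le> loomis_whitney_const DIM('a) * (real P * \<delta> ^ (DIM('a) - 1)) ^ DIM('a)"
proof -
  let ?m = "DIM('a)"
  have "(real (card S) * \<delta> ^ ?m) ^ (?m - 1) = real (card S) ^ (?m - 1) * \<delta> ^ (?m * (?m - 1))"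
    by (simp add: power_mult_distrib power_mult)
  also have "\<dots> \<le> loomis_whitney_const ?m * real P ^ ?m * \<delta> ^ (?m * (?m - 1))"
    using loomis_whitney_weak[of Basis S P] assms by (intro mult_right_mono) auto
  also have "\<dots> = loomis_whitney_const ?m * (real P * \<delta> ^ (?m - 1)) ^ ?m"
    by (simp add: power_mult_distrib mult.commute flip: power_mult)
  finally show ?thesis .
qed

lemma obtain_cube_columns_max_projection:
  fixes S :: "('a::euclidean_space \<Rightarrow> int) set"
  assumes "\<delta> > 0" "finite S" "\<forall>z\<in>S. \<forall>c. c \<notin> Basis \<longrightarrow> z c = 0"
  obtains b R where "cube_columns \<delta> b R" "R \<subseteq> S" "\<forall>c\<in>Basis. card ((\<lambda>z. z(c := 0)) ` S) \<le> card R"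
proof -
  define P where "P = Max ((\<lambda>c. card ((\<lambda>z. z(c := 0)) ` S)) ` Basis)"
  have "P \<in> (\<lambda>c. card ((\<lambda>z. z(c := 0)) ` S)) ` Basis"
    unfolding P_def by (intro Max_in) (simp_all add: nonempty_Basis)
  then obtain b where b: "b \<in> Basis" "card ((\<lambda>z. z(b := 0)) ` S) = P"
    by blast
  obtain R where R: "R \<subseteq> S" "inj_on (\<lambda>z. z(b := 0)) R" "(\<lambda>z. z(b := 0)) ` R = (\<lambda>z. z(b := 0)) ` S"
    by (rule obtain_inj_on_subset_same_image)
  have "cube_columns \<delta> b R"
    using assms b(1) R(1,2) by unfold_locales (auto intro: finite_subset)
  moreover have "card R = P"
    using card_image[OF R(2)] R(3) b(2) by simp
  ultimately show ?thesis
    using that R(1) unfolding P_def by simp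
qed

lemma large_column_family:
  fixes U :: "'a::euclidean_space set"
  assumes "DIM('a) \<ge> 2" "open U" "emeasure lborel U = \<infinity>"
  obtains \<delta> b R where "cube_columns \<delta> b R" "\<forall>z\<in>R. cube \<delta> z \<subseteq> U"
    "B \<le> 2 * \<delta> ^ (DIM('a) - 1) * card R"
proof -
  let ?m = "DIM('a)" and ?L = "loomis_whitney_const DIM('a)"
  define M where "M = max 0 B"
  define A where "A = max 1 (?L * M ^ ?m)"
  obtain \<delta> S where \<delta>: "\<delta> > 0" and S: "finite S" "\<forall>z\<in>S. \<forall>c. c \<notin> Basis \<longrightarrow> z c = 0"
    "\<forall>z\<in>S. cube \<delta> z \<subseteq> U" and AS: "A \<le> real (card S) * \<delta> ^ ?m"
    using large_cube_family[OF assms(2,3)] by blast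
  obtain b R where R: "cube_columns \<delta> b R" "R \<subseteq> S"
    "\<forall>c\<in>Basis. card ((\<lambda>z. z(c := 0)) ` S) \<le> card R"
    using obtain_cube_columns_max_projection[OF \<delta> S(1,2)] by blast
  have "?L * M ^ ?m \<le> A" by (simp add: A_def)
  also have "\<dots> \<le> A ^ (?m - 1)"
    using power_increasing[of 1 "?m - 1" A] assms(1) by (simp add: A_def)
  also have "\<dots> \<le> (real (card S) * \<delta> ^ ?m) ^ (?m - 1)"
    using AS by (intro power_mono) (auto simp: A_def)
  also have "\<dots> \<le> ?L * (real (card R) * \<delta> ^ (?m - 1)) ^ ?m"
    by (rule loomis_whitney_cube_union[OF assms(1) S(1,2) R(3) \<delta>])
  finally have "M ^ ?m \<le> (real (card R) * \<delta> ^ (?m - 1)) ^ ?m"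
    by (rule mult_left_le_imp_le[OF _ loomis_whitney_const_pos])
  then have "B \<le> real (card R) * \<delta> ^ (?m - 1)"
    using power_mono_iff[of M "real (card R) * \<delta> ^ (?m - 1)" ?m] \<delta> by (simp add: M_def)
  also have "\<dots> \<le> 2 * \<delta> ^ (?m - 1) * card R"
    using \<delta> by (simp add: algebra_simps)
  finally show ?thesis
    using that R(1,2) S(3) by blast
qed

theorem corollary3p9:
  fixes U :: "'a::euclidean_space set"
  assumes "DIM('a) \<ge> 2"
    and "open U"
    and "emeasure lebesgue U = \<infinity>"
  shows "anexometer U = \<infinity>"
proof (rule ereal_top)
  fix B :: real
  have "emeasure lborel U = \<infinity>"
    using assms(2,3) by simp
  then obtain \<delta> b R where columns: "cube_columns \<delta> b R" and cubes: "\<forall>z\<in>R. cube \<delta> z \<subseteq> U"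
    and B: "B \<le> 2 * \<delta> ^ (DIM('a) - 1) * card R"
    using large_column_family[OF assms(1,2)] by blast
  interpret cube_columns \<delta> b R by (fact columns)
  have "ereal (2 * \<delta> ^ (DIM('a) - 1) * card R) \<le> anexometer U"
    by (rule anexometer_ge_column_mass[OF assms(2) cubes])
  then show "ereal B \<le> anexometer U"
    using B by (meson ereal_less_eq(3) order_trans)
qed

end
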